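(* If a path $\omega\in\Omega$ is CH-random for a computable forecasting system $\varphi$, then $\min I_\textnormal{CH}(\omega)\le\liminf_{n\to\infty}\overline{\varphi}(\omega_{1:n})$ and $\limsup_{n\to\infty}\underline{\varphi}(\omega_{1:n})\le\max I_\textnormal{CH}(\omega)$.
   Context: $\mathcal{X}=\{0,1\}$; $\Omega=\mathcal{X}^{\mathbb{N}}$ (paths); $\mathbb{S}=\bigcup_{n\ge0}\mathcal X^n$ (situations), $\omega_{1:n}=(\omega_1,\dots,\omega_n)$, $\omega_{1:0}$ the empty string. $\mathcal{I}$: nonempty closed intervals $I\subseteq[0,1]$. A forecasting system is $\varphi:\mathbb S\to\mathcal I$, $\underline\varphi=\min\varphi$, $\overline\varphi=\max\varphi$; an interval forecast $I$ is identified with the constant forecasting system $s\mapsto I$. $\varphi$ is computable if there are recursive $\underline q,\overline q:\mathbb S\times\mathbb N_0\to\mathbb Q$ with $|\underline\varphi(s)-\underline q(s,n)|<2^{-n}$ and $|\overline\varphi(s)-\overline q(s,n)|<2^{-n}$. A path $\omega$ is CH-random for $\varphi$ if for every recursive selection process $S:\mathbb S\to\{0,1\}$ with $\sum_{k=0}^{n-1}S(\omega_{1:k})\to\infty$: $\liminf_n \frac{\sum_{k<n}S(\omega_{1:k})[\omega_{k+1}-\underline\varphi(\omega_{1:k})]}{\sum_{k<n}S(\omega_{1:k})}\ge0$ and $\limsup_n \frac{\sum_{k<n}S(\omega_{1:k})[\omega_{k+1}-\overline\varphi(\omega_{1:k})]}{\sum_{k<n}S(\omega_{1:k})}\le0$.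 $\mathcal I_\textnormal{CH}(\omega)=\{I\in\mathcal I:\omega\text{ CH-random for }I\}$, $I_\textnormal{CH}(\omega)=\bigcap_{I\in\mathcal I_\textnormal{CH}(\omega)}I$. *)

theory Defs
  imports Complex_Main "HOL-Library.Extended_Real" "HOL-Library.Liminf_Limsup" "HOL-Library.Nat_Bijection"
begin

text \<open>recfn n f: f is a total recursive function of arity n; f is only meaningful
  on argument lists of length n.\<close>

inductive recfn :: "nat \<Rightarrow> (nat list \<Rightarrow> nat) \<Rightarrow> bool" where
  rf_zero: "recfn n (\<lambda>_. 0)"
| rf_succ: "recfn 1 (\<lambda>xs. Suc (hd xs))"
| rf_proj: "i < n \<Longrightarrow> recfn n (\<lambda>xs. xs ! i)"
| rf_comp: "recfn m f \<Longrightarrow> length gs = m \<Longrightarrow> (\<forall>g\<in>set gs. recfn n g) \<Longrightarrow>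
            recfn n (\<lambda>xs. f (map (\<lambda>g. g xs) gs))"
| rf_prim: "recfn n f \<Longrightarrow> recfn (Suc (Suc n)) g \<Longrightarrow>
            recfn (Suc n) (\<lambda>xs. rec_nat (f (tl xs)) (\<lambda>y r. g (y # r # tl xs)) (hd xs))"
| rf_mu: "recfn (Suc n) f \<Longrightarrow> (\<forall>xs. length xs = n \<longrightarrow> (\<exists>y. f (y # xs) = 0)) \<Longrightarrow>
          recfn n (\<lambda>xs. LEAST y. f (y # xs) = 0)"

definition enc_sit :: "bool list \<Rightarrow> nat" where
  "enc_sit s = list_encode (map of_bool s)"

text \<open>Every natural number codes a rational (surjectively).\<close>
definition dec_rat :: "nat \<Rightarrow> rat" where
  "dec_rat k = of_int (int_decode (fst (prod_decode k))) / of_nat (Suc (snd (prod_decode k)))"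

text \<open>A path is omega :: nat => bool, with omega k standing for omega_(k+1).
  omega_(1:n) is the list of the first n outcomes.\<close>
definition prefix :: "(nat \<Rightarrow> bool) \<Rightarrow> nat \<Rightarrow> bool list" where
  "prefix \<omega> n = map \<omega> [0..<n]"

definition intervals :: "real set set" where
  "intervals = {I. \<exists>a b. 0 \<le> a \<and> a \<le> b \<and> b \<le> 1 \<and> I = {a..b}}"

definition forecasting_system :: "(bool list \<Rightarrow> real set) \<Rightarrow> bool" where
  "forecasting_system \<phi> \<longleftrightarrow> (\<forall>s. \<phi> s \<in> intervals)"

definition lower :: "(bool list \<Rightarrow> real set) \<Rightarrow> bool list \<Rightarrow> real" where
  "lower \<phi> s = Inf (\<phi> s)"

definition upper :: "(bool list \<Rightarrow> real set) \<Rightarrow> bool list \<Rightarrow> real" where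
  "upper \<phi> s = Sup (\<phi> s)"

definition computable_fs :: "(bool list \<Rightarrow> real set) \<Rightarrow> bool" where
  "computable_fs \<phi> \<longleftrightarrow> (\<exists>gl gu. recfn 2 gl \<and> recfn 2 gu \<and>
     (\<forall>s n. \<bar>lower \<phi> s - real_of_rat (dec_rat (gl [enc_sit s, n]))\<bar> < 1 / 2 ^ n \<and>
            \<bar>upper \<phi> s - real_of_rat (dec_rat (gu [enc_sit s, n]))\<bar> < 1 / 2 ^ n))"

definition recursive_selection :: "(bool list \<Rightarrow> nat) \<Rightarrow> bool" where
  "recursive_selection S \<longleftrightarrow> (\<forall>s. S s \<in> {0, 1}) \<and> (\<exists>g. recfn 1 g \<and> (\<forall>s. S s = g [enc_sit s]))"

definition CH_random :: "(bool list \<Rightarrow> real set) \<Rightarrow> (nat \<Rightarrow> bool) \<Rightarrow> bool" where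
  "CH_random \<phi> \<omega> \<longleftrightarrow>
    (\<forall>S. recursive_selection S \<longrightarrow>
       filterlim (\<lambda>n. \<Sum>k<n. real (S (prefix \<omega> k))) at_top sequentially \<longrightarrow>
       (liminf (\<lambda>n. ereal ((\<Sum>k<n. real (S (prefix \<omega> k)) * (of_bool (\<omega> k) - lower \<phi> (prefix \<omega> k)))
                          / (\<Sum>k<n. real (S (prefix \<omega> k))))) \<ge> 0 \<and>
        limsup (\<lambda>n. ereal ((\<Sum>k<n. real (S (prefix \<omega> k)) * (of_bool (\<omega> k) - upper \<phi> (prefix \<omega> k)))
                          / (\<Sum>k<n. real (S (prefix \<omega> k))))) \<le> 0))"

definition I_CH_set :: "(nat \<Rightarrow> bool) \<Rightarrow> real set set" where
  "I_CH_set \<omega> = {I \<in> intervals. CH_random (\<lambda>_. I) \<omega>}"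

definition I_CH :: "(nat \<Rightarrow> bool) \<Rightarrow> real set" where
  "I_CH \<omega> = \<Inter> (I_CH_set \<omega>)"

end

theory Submission
  imports Defs
begin

text \<open>
  Fix an interval \<open>I\<close> for which \<open>\<omega>\<close> is CH-random, and suppose the liminf of the upper forecasts
  along \<open>\<omega>\<close> lies below \<open>a < b < min I\<close>. Computable approximations of the upper forecast yield a
  recursive selection rule that picks infinitely many situations, and only situations whose upper
  forecast is below \<open>b\<close>. Along it, CH-randomness for \<open>\<phi>\<close> keeps the relative frequency of ones
  asymptotically below \<open>b\<close>, while CH-randomness for \<open>I\<close> keeps it above \<open>min I\<close>: a contradiction.
  The same argument for two constant forecasts shows that the intervals for which \<open>\<omega>\<close> is CH-random
  pairwise overlap, so their intersection is \<open>[sup min I, inf max I]\<close> and the theorem reduces to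
  one interval at a time; the bound for the lower forecasts is symmetric.
\<close>

lemma frequently_less_if_Liminf_less:
  fixes f :: "_ \<Rightarrow> 'a::complete_linorder"
  assumes "Liminf F f < y"
  shows "\<exists>\<^sub>F x in F. f x < y"
proof -
  obtain z where "z < y" "\<not> eventually (\<lambda>x. z < f x) F"
    using assms le_Liminf_iff[of y F f] by (auto simp: not_le)
  then show ?thesis
    by (auto simp: not_eventually not_less elim!: frequently_elim1 intro: le_less_trans)
qed

lemma frequently_greater_if_less_Limsup:
  fixes f :: "_ \<Rightarrow> 'a::complete_linorder"
  assumes "y < Limsup F f"
  shows "\<exists>\<^sub>F x in F. y < f x"
proof -
  obtain z where "y < z" "\<not> eventually (\<lambda>x. f x < z) F"
    using assms Limsup_le_iff[of F f y] by (auto simp: not_le)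
  then show ?thesis
    by (auto simp: not_eventually not_less elim!: frequently_elim1 intro: less_le_trans)
qed

lemma ereal_cSup_le:
  assumes "A \<noteq> {}" "bdd_above A" "\<And>a. a \<in> A \<Longrightarrow> ereal a \<le> L"
  shows "ereal (Sup A) \<le> L"
proof (rule ccontr)
  assume "\<not> ereal (Sup A) \<le> L"
  then obtain r where "L < ereal r" "r < Sup A"
    using ereal_dense2[of L "ereal (Sup A)"] by (auto simp: not_le)
  then obtain a where "a \<in> A" "r < a"
    using less_cSup_iff[OF assms(1,2)] by blast
  then have "ereal a < ereal r"
    using assms(3)[of a] \<open>L < ereal r\<close> by (meson le_less_trans)
  with \<open>r < a\<close> show False by simp
qed

lemma ereal_le_cInf:
  assumes "A \<noteq> {}" "bdd_below A" "\<And>a. a \<in> A \<Longrightarrow> L \<le> ereal a"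
  shows "L \<le> ereal (Inf A)"
proof (rule ccontr)
  assume "\<not> L \<le> ereal (Inf A)"
  then obtain r where "Inf A < r" "ereal r < L"
    using ereal_dense2[of "ereal (Inf A)" L] by (auto simp: not_le)
  then obtain a where "a \<in> A" "a < r"
    using cInf_less_iff[OF assms(1,2)] by blast
  then have "ereal r < ereal a"
    using assms(3)[of a] \<open>ereal r < L\<close> by (meson less_le_trans)
  with \<open>a < r\<close> show False by simp
qed

lemma Inter_overlapping_intervals:
  fixes C :: "real set set"
  assumes "C \<noteq> {}" "\<And>I. I \<in> C \<Longrightarrow> I = {Inf I..Sup I}"
    and overlap: "\<And>I J. I \<in> C \<Longrightarrow> J \<in> C \<Longrightarrow> Inf I \<le> Sup J"
  shows "\<Inter> C = {Sup (Inf ` C)..Inf (Sup ` C)}" "Sup (Inf ` C) \<le> Inf (Sup ` C)"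
proof -
  obtain J where "J \<in> C" using assms(1) by blast
  then have bdd: "bdd_above (Inf ` C)" "bdd_below (Sup ` C)"
    using overlap by (auto intro!: bdd_aboveI[of _ "Sup J"] bdd_belowI[of _ "Inf J"])
  have "x \<in> \<Inter> C \<longleftrightarrow> (\<forall>I\<in>C. Inf I \<le> x) \<and> (\<forall>I\<in>C. x \<le> Sup I)" for x
    using assms(2) by (metis (no_types, lifting) Inter_iff atLeastAtMost_iff)
  also have "\<dots> x \<longleftrightarrow> Sup (Inf ` C) \<le> x \<and> x \<le> Inf (Sup ` C)" for x
    using assms(1) bdd by (simp add: cSup_le_iff le_cInf_iff)
  finally show "\<Inter> C = {Sup (Inf ` C)..Inf (Sup ` C)}"
    by (simp add: set_eq_iff)
  show "Sup (Inf ` C) \<le> Inf (Sup ` C)"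
    using assms(1) bdd overlap by (auto simp: cSup_le_iff le_cInf_iff)
qed

section \<open>Closure properties of recursive functions\<close>

text \<open>Agreement with a \<open>recfn\<close> is required only on argument lists of the right length, so closure
  lemmas can be stated with terms like \<open>xs!0 + xs!1\<close>.\<close>

definition recursive :: "nat \<Rightarrow> (nat list \<Rightarrow> nat) \<Rightarrow> bool" where
  "recursive n F \<longleftrightarrow> (\<exists>f. recfn n f \<and> (\<forall>xs. length xs = n \<longrightarrow> f xs = F xs))"

lemma recursive_recfn: "recfn n f \<Longrightarrow> recursive n f"
  unfolding recursive_def by blast

lemma recursive_cong: "recursive n F \<Longrightarrow> (\<And>xs. length xs = n \<Longrightarrow> F xs = G xs) \<Longrightarrow> recursive n G"
  unfolding recursive_def by metis

lemma recursive_proj: "i < n \<Longrightarrow> recursive n (\<lambda>xs. xs ! i)"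
  by (rule recursive_recfn) (rule rf_proj)

lemma recursive_comp:
  assumes "recursive m F" "length Gs = m" "\<forall>G\<in>set Gs. recursive n G"
  shows "recursive n (\<lambda>xs. F (map (\<lambda>G. G xs) Gs))"
proof -
  obtain f where f: "recfn m f" "\<forall>xs. length xs = m \<longrightarrow> f xs = F xs"
    using assms(1) unfolding recursive_def by auto
  have "\<exists>gs. length gs = length Gs \<and> (\<forall>g\<in>set gs. recfn n g) \<and>
      (\<forall>xs. length xs = n \<longrightarrow> map (\<lambda>g. g xs) gs = map (\<lambda>G. G xs) Gs)"
    using assms(3)
  proof (induction Gs)
    case (Cons G Gs)
    then obtain gs where "length gs = length Gs" "\<forall>g\<in>set gs. recfn n g"
      "\<forall>xs. length xs = n \<longrightarrow> map (\<lambda>g. g xs) gs = map (\<lambda>G. G xs) Gs" by auto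
    moreover obtain g where "recfn n g" "\<forall>xs. length xs = n \<longrightarrow> g xs = G xs"
      using Cons.prems unfolding recursive_def by auto
    ultimately show ?case by (intro exI[of _ "g # gs"]) auto
  qed simp
  then obtain gs where gs: "length gs = m" "\<forall>g\<in>set gs. recfn n g"
      "\<forall>xs. length xs = n \<longrightarrow> map (\<lambda>g. g xs) gs = map (\<lambda>G. G xs) Gs"
    using assms(2) by auto
  have "recfn n (\<lambda>xs. f (map (\<lambda>g. g xs) gs))"
    using f(1) gs(1,2) by (rule rf_comp)
  moreover have "\<forall>xs. length xs = n \<longrightarrow> f (map (\<lambda>g. g xs) gs) = F (map (\<lambda>G. G xs) Gs)"
    using f(2) gs(3) assms(2) by auto
  ultimately show ?thesis unfolding recursive_def by blast
qed

lemma recursive_comp1: "recursive 1 F \<Longrightarrow> recursive n G \<Longrightarrow> recursive n (\<lambda>xs. F [G xs])"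
  using recursive_comp[of 1 F "[G]" n] by simp

lemma recursive_comp2:
  "recursive 2 F \<Longrightarrow> recursive n G \<Longrightarrow> recursive n H \<Longrightarrow> recursive n (\<lambda>xs. F [G xs, H xs])"
  using recursive_comp[of 2 F "[G, H]" n] by (simp add: numeral_2_eq_2)

lemma recursive_Suc: "recursive n G \<Longrightarrow> recursive n (\<lambda>xs. Suc (G xs))"
  using recursive_comp1[OF recursive_recfn[OF rf_succ]] by simp

lemma recursive_const: "recursive n (\<lambda>_. c)"
  by (induction c) (auto intro: recursive_recfn rf_zero recursive_Suc)

lemma recursive_rec_nat:
  assumes "recursive n F" "recursive (Suc (Suc n)) G"
  shows "recursive (Suc n) (\<lambda>xs. rec_nat (F (tl xs)) (\<lambda>y r. G (y # r # tl xs)) (hd xs))"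
proof -
  obtain f where f: "recfn n f" "\<forall>xs. length xs = n \<longrightarrow> f xs = F xs"
    using assms(1) unfolding recursive_def by auto
  obtain g where g: "recfn (Suc (Suc n)) g" "\<forall>xs. length xs = Suc (Suc n) \<longrightarrow> g xs = G xs"
    using assms(2) unfolding recursive_def by auto
  have "recfn (Suc n) (\<lambda>xs. rec_nat (f (tl xs)) (\<lambda>y r. g (y # r # tl xs)) (hd xs))"
    using f(1) g(1) by (rule rf_prim)
  moreover have "rec_nat (f (tl xs)) (\<lambda>y r. g (y # r # tl xs)) m
      = rec_nat (F (tl xs)) (\<lambda>y r. G (y # r # tl xs)) m" if "length xs = Suc n" for xs m
    using that f(2) g(2) by (induction m) auto
  ultimately show ?thesis unfolding recursive_def by blast
qed

lemma recursive_rec_nat_unary: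
  assumes "recursive 2 G"
  shows "recursive 1 (\<lambda>xs. rec_nat c (\<lambda>y r. G [y, r]) (xs!0))"
proof -
  have "recursive (Suc 0) (\<lambda>xs. rec_nat c (\<lambda>y r. G (y # r # tl xs)) (hd xs))"
    using recursive_rec_nat[of 0 "\<lambda>_. c" G] assms by (simp add: recursive_const numeral_2_eq_2)
  then show ?thesis
    by (simp, rule recursive_cong) (auto simp: length_Suc_conv)
qed

lemma recursive_rec_nat_binary:
  assumes "recursive 1 F" "recursive 3 G"
  shows "recursive 2 (\<lambda>xs. rec_nat (F [xs!1]) (\<lambda>y r. G [y, r, xs!1]) (xs!0))"
proof -
  have "recursive (Suc 1) (\<lambda>xs. rec_nat (F (tl xs)) (\<lambda>y r. G (y # r # tl xs)) (hd xs))"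
    using recursive_rec_nat[of 1 F G] assms by (simp add: numeral_3_eq_3)
  then have "recursive 2 (\<lambda>xs. rec_nat (F (tl xs)) (\<lambda>y r. G (y # r # tl xs)) (hd xs))"
    by (simp add: numeral_2_eq_2)
  then show ?thesis
    by (rule recursive_cong) (auto simp: numeral_2_eq_2 length_Suc_conv)
qed

lemma recursive_Least:
  assumes "recursive (Suc n) F" "\<And>xs. length xs = n \<Longrightarrow> \<exists>y. F (y # xs) = 0"
  shows "recursive n (\<lambda>xs. LEAST y. F (y # xs) = 0)"
proof -
  obtain f where f: "recfn (Suc n) f" "\<forall>xs. length xs = Suc n \<longrightarrow> f xs = F xs"
    using assms(1) unfolding recursive_def by auto
  have "recfn n (\<lambda>xs. LEAST y. f (y # xs) = 0)"
    by (rule rf_mu) (use f assms(2) in auto)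
  moreover have "(LEAST y. f (y # xs) = 0) = (LEAST y. F (y # xs) = 0)" if "length xs = n" for xs
    using f that by auto
  ultimately show ?thesis unfolding recursive_def by blast
qed

lemma recursive_add: "recursive n G \<Longrightarrow> recursive n H \<Longrightarrow> recursive n (\<lambda>xs. G xs + H xs)"
proof -
  have "recursive 2 (\<lambda>xs. rec_nat (xs!1) (\<lambda>y r. Suc r) (xs!0))"
    using recursive_rec_nat_binary[of "\<lambda>ys. ys!0" "\<lambda>ys. Suc (ys!1)"]
    by (simp add: recursive_proj recursive_Suc)
  moreover have "rec_nat z (\<lambda>y r. Suc r) m = m + z" for z m :: nat
    by (induction m) auto
  ultimately have "recursive 2 (\<lambda>xs. xs!0 + xs!1)" by simp
  then show "recursive n G \<Longrightarrow> recursive n H \<Longrightarrow> recursive n (\<lambda>xs. G xs + H xs)"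
    using recursive_comp2 by fastforce
qed

lemma recursive_mult: "recursive n G \<Longrightarrow> recursive n H \<Longrightarrow> recursive n (\<lambda>xs. G xs * H xs)"
proof -
  have "recursive 2 (\<lambda>xs. rec_nat 0 (\<lambda>y r. r + xs!1) (xs!0))"
    using recursive_rec_nat_binary[of "\<lambda>_. 0" "\<lambda>ys. ys!1 + ys!2"]
    by (simp add: recursive_const recursive_add recursive_proj)
  moreover have "rec_nat 0 (\<lambda>y r. r + z) m = m * z" for z m :: nat
    by (induction m) auto
  ultimately have "recursive 2 (\<lambda>xs. xs!0 * xs!1)" by simp
  then show "recursive n G \<Longrightarrow> recursive n H \<Longrightarrow> recursive n (\<lambda>xs. G xs * H xs)"
    using recursive_comp2 by fastforce
qed

lemma recursive_diff: "recursive n G \<Longrightarrow> recursive n H \<Longrightarrow> recursive n (\<lambda>xs. G xs - H xs)"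
proof -
  have "recursive 1 (\<lambda>xs. rec_nat 0 (\<lambda>y r. y) (xs!0))"
    using recursive_rec_nat_unary[of "\<lambda>ys. ys!0"] by (simp add: recursive_proj)
  moreover have "rec_nat 0 (\<lambda>y r. y) m = m - 1" for m :: nat
    by (induction m) auto
  ultimately have pred: "recursive 1 (\<lambda>xs. xs!0 - 1)" by simp
  have "recursive 2 (\<lambda>xs. rec_nat (xs!1) (\<lambda>y r. r - 1) (xs!0))"
    using recursive_rec_nat_binary[of "\<lambda>ys. ys!0" "\<lambda>ys. ys!1 - 1"]
      recursive_comp1[OF pred recursive_proj[of 1 3]]
    by (simp add: recursive_proj)
  moreover have "rec_nat z (\<lambda>y r. r - 1) m = z - m" for z m :: nat
    by (induction m) auto
  ultimately have "recursive 2 (\<lambda>xs. xs!1 - xs!0)" by simp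
  then show "recursive n G \<Longrightarrow> recursive n H \<Longrightarrow> recursive n (\<lambda>xs. G xs - H xs)"
    using recursive_comp2[of _ n H G] by fastforce
qed

lemma recursive_triangle: "recursive n G \<Longrightarrow> recursive n (\<lambda>xs. triangle (G xs))"
proof -
  have "recursive 1 (\<lambda>xs. rec_nat 0 (\<lambda>y r. r + Suc y) (xs!0))"
    using recursive_rec_nat_unary[of "\<lambda>ys. ys!1 + Suc (ys!0)"]
    by (simp add: recursive_add recursive_Suc recursive_proj)
  moreover have "rec_nat 0 (\<lambda>y r. r + Suc y) m = triangle m" for m :: nat
    by (induction m) auto
  ultimately have "recursive 1 (\<lambda>xs. triangle (xs!0))" by simp
  then show "recursive n G \<Longrightarrow> recursive n (\<lambda>xs. triangle (G xs))"
    using recursive_comp1 by fastforce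
qed

lemma recursive_less:
  assumes "recursive n G" "recursive n H"
  shows "recursive n (\<lambda>xs. of_bool (G xs < H xs))"
proof -
  have "recursive n (\<lambda>xs. 1 - (Suc (G xs) - H xs))"
    by (intro recursive_diff recursive_const recursive_Suc assms)
  then show ?thesis by (rule recursive_cong) auto
qed

lemma recursive_odd: "recursive n G \<Longrightarrow> recursive n (\<lambda>xs. of_bool (odd (G xs)))"
proof -
  have "recursive 1 (\<lambda>xs. rec_nat 0 (\<lambda>y r. 1 - r) (xs!0))"
    using recursive_rec_nat_unary[of "\<lambda>ys. 1 - ys!1"]
    by (simp add: recursive_diff recursive_const recursive_proj)
  moreover have "rec_nat 0 (\<lambda>y r. 1 - r) m = (of_bool (odd m) :: nat)" for m :: nat
    by (induction m) auto
  ultimately have "recursive 1 (\<lambda>xs. of_bool (odd (xs!0)))" by simp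
  then show "recursive n G \<Longrightarrow> recursive n (\<lambda>xs. of_bool (odd (G xs)))"
    using recursive_comp1 by fastforce
qed

lemma recursive_disj:
  assumes "recursive n (\<lambda>xs. of_bool (P xs))" "recursive n (\<lambda>xs. of_bool (Q xs))"
  shows "recursive n (\<lambda>xs. of_bool (P xs \<or> Q xs))"
proof -
  have "recursive n (\<lambda>xs. of_bool (0 < of_bool (P xs) + (of_bool (Q xs) :: nat)))"
    by (intro recursive_less recursive_add recursive_const assms)
  then show ?thesis by (rule recursive_cong) auto
qed

section \<open>Comparing decoded rationals is recursive\<close>

definition triangle_root :: "nat \<Rightarrow> nat" where
  "triangle_root k = (LEAST t. k < triangle (Suc t))"

lemma triangle_mono: "m \<le> n \<Longrightarrow> triangle m \<le> triangle n"
  unfolding triangle_def by (intro div_le_mono mult_le_mono) auto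

lemma prod_decode_triangle_root:
  "prod_decode k = (k - triangle (triangle_root k), triangle_root k - (k - triangle (triangle_root k)))"
proof -
  obtain a b where ab: "prod_decode k = (a, b)" by fastforce
  have k: "k = triangle (a + b) + a"
    using prod_decode_inverse[of k] ab by (simp add: prod_encode_def)
  have "triangle_root k = a + b"
    unfolding triangle_root_def
  proof (rule Least_equality)
    show "k < triangle (Suc (a + b))" using k by simp
  next
    fix t assume "k < triangle (Suc t)"
    then show "a + b \<le> t"
      using k triangle_mono[of "Suc t" "a + b"] by linarith
  qed
  then show ?thesis using ab k by simp
qed

lemma recursive_triangle_root: "recursive n G \<Longrightarrow> recursive n (\<lambda>xs. triangle_root (G xs))"
proof -
  have "recursive 1 (\<lambda>xs. LEAST y. (\<lambda>ys. Suc (ys!1) - triangle (Suc (ys!0))) (y # xs) = 0)"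
  proof (rule recursive_Least)
    show "recursive (Suc 1) (\<lambda>ys. Suc (ys!1) - triangle (Suc (ys!0)))"
      by (intro recursive_diff recursive_Suc recursive_triangle recursive_proj) auto
    show "\<exists>y. (\<lambda>ys. Suc (ys!1) - triangle (Suc (ys!0))) (y # xs) = 0" for xs :: "nat list"
      by (rule exI[of _ "xs!0"]) simp
  qed
  then have "recursive 1 (\<lambda>xs. triangle_root (xs!0))"
    by (simp add: triangle_root_def less_Suc_eq_le)
  then show "recursive n G \<Longrightarrow> recursive n (\<lambda>xs. triangle_root (G xs))"
    using recursive_comp1 by fastforce
qed

lemma recursive_prod_decode:
  assumes "recursive n G"
  shows "recursive n (\<lambda>xs. fst (prod_decode (G xs)))" "recursive n (\<lambda>xs. snd (prod_decode (G xs)))"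
  unfolding prod_decode_triangle_root
  by (simp_all add: recursive_diff recursive_triangle recursive_triangle_root assms)

lemma dec_rat_less_iff:
  assumes "0 < u" "0 < v"
  shows "dec_rat k < of_nat u / of_nat v \<longleftrightarrow>
    odd (fst (prod_decode k)) \<or> fst (prod_decode k) * v < 2 * u * Suc (snd (prod_decode k))"
proof -
  obtain a b where ab: "prod_decode k = (a, b)" by fastforce
  have dec: "dec_rat k = of_int (int_decode a) / of_nat (Suc b)"
    unfolding dec_rat_def ab by simp
  text \<open>\<open>int_decode\<close> sends \<open>2h\<close> to \<open>h\<close> and odd codes to negative integers.\<close>
  show ?thesis
  proof (cases "even a")
    case True
    then obtain h where a: "a = 2 * h" by blast
    have "dec_rat k < of_nat u / of_nat v \<longleftrightarrow> (of_nat (h * v) :: rat) < of_nat (u * Suc b)"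
      unfolding dec a using assms
      by (simp add: int_decode_def sum_decode_def divide_simps algebra_simps)
    then show ?thesis using True unfolding ab a of_nat_less_iff by (simp add: mult.assoc) linarith
  next
    case False
    then have "int_decode a < 0" by (simp add: int_decode_def sum_decode_def)
    then have "dec_rat k < 0" unfolding dec by (simp add: divide_neg_pos del: of_nat_Suc)
    also have "0 < (of_nat u / of_nat v :: rat)" using assms by simp
    finally show ?thesis using False ab by simp
  qed
qed

lemma recursive_dec_rat_less:
  assumes "recursive n G" "0 < q"
  shows "recursive n (\<lambda>xs. of_bool (dec_rat (G xs) < q))"
proof -
  obtain a b where ab: "quotient_of q = (a, b)" by fastforce
  have q: "q = of_int a / of_int b" and "0 < b"
    using quotient_of_div[OF ab] quotient_of_denom_pos[OF ab] by simp_all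
  with assms(2) have "0 < a" by (simp add: zero_less_divide_iff)
  define u v where "u = nat a" and "v = nat b"
  have uv: "0 < u" "0 < v" "q = of_nat u / of_nat v"
    using \<open>0 < a\<close> \<open>0 < b\<close> q unfolding u_def v_def by simp_all
  have "recursive n (\<lambda>xs. of_bool (odd (fst (prod_decode (G xs))) \<or>
      fst (prod_decode (G xs)) * v < 2 * u * Suc (snd (prod_decode (G xs)))))"
    by (intro recursive_disj recursive_odd recursive_less recursive_mult recursive_Suc
        recursive_const recursive_prod_decode assms(1))
  then show ?thesis
    by (rule recursive_cong) (simp add: uv dec_rat_less_iff)
qed

section \<open>Selection by a computable threshold\<close>

lemma recursive_selectionI:
  assumes "recursive 1 F" "\<And>s. S s = F [enc_sit s]" "\<And>s. S s \<le> 1"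
  shows "recursive_selection S"
proof -
  obtain f where "recfn 1 f" "\<forall>xs. length xs = 1 \<longrightarrow> f xs = F xs"
    using assms(1) unfolding recursive_def by blast
  moreover have "S s \<in> {0, 1}" for s
    using assms(3)[of s] by auto
  ultimately show ?thesis
    unfolding recursive_selection_def using assms(2) by auto
qed

lemma threshold_selection:
  fixes f :: "bool list \<Rightarrow> real"
  assumes g: "recfn 2 g"
    and approx: "\<And>s n. \<bar>f s - real_of_rat (dec_rat (g [enc_sit s, n]))\<bar> < 1 / 2 ^ n"
    and "0 \<le> a" "a < b"
  obtains P where "recursive_selection (\<lambda>s. of_bool (P s))"
    "recursive_selection (\<lambda>s. of_bool (\<not> P s))" "\<And>s. f s < a \<Longrightarrow> P s" "\<And>s. P s \<Longrightarrow> f s < b"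
proof -
  txt \<open>\<open>P s\<close> compares a \<open>2\<^sup>-\<^sup>N\<close>-approximation of \<open>f s\<close> with a rational \<open>q \<in> (a, b)\<close>, where
    \<open>2\<^sup>-\<^sup>N\<close> is smaller than both \<open>q - a\<close> and \<open>b - q\<close>.\<close>
  obtain q where q: "a < real_of_rat q" "real_of_rat q < b"
    using of_rat_dense[OF \<open>a < b\<close>] by blast
  with \<open>0 \<le> a\<close> have "0 < q" by (metis le_less_trans zero_less_of_rat_iff)
  obtain N :: nat where N: "1 / 2 ^ N < min (real_of_rat q - a) (b - real_of_rat q)"
    using real_arch_pow_inv[of "min (real_of_rat q - a) (b - real_of_rat q)" "1 / 2"] q
    by (auto simp: power_one_over)
  define P where "P s \<longleftrightarrow> dec_rat (g [enc_sit s, N]) < q" for s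
  have less: "recursive 1 (\<lambda>xs. of_bool (dec_rat (g [xs!0, N]) < q))"
    using recursive_comp2[OF recursive_recfn[OF g] recursive_proj recursive_const, of 0 1 N] \<open>0 < q\<close>
    by (simp add: recursive_dec_rat_less)
  show ?thesis
  proof
    show "recursive_selection (\<lambda>s. of_bool (P s))"
      using less by (rule recursive_selectionI) (simp_all add: P_def)
    show "recursive_selection (\<lambda>s. of_bool (\<not> P s))"
      using recursive_diff[OF recursive_const[of 1 1] less]
      by (rule recursive_selectionI) (simp_all add: P_def)
    show "P s" if "f s < a" for s
    proof -
      have "real_of_rat (dec_rat (g [enc_sit s, N])) < real_of_rat q"
        using approx[of s N] N that unfolding abs_less_iff by linarith
      then show ?thesis unfolding P_def of_rat_less .
    qed
    show "f s < b" if "P s" for s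
    proof -
      have "real_of_rat (dec_rat (g [enc_sit s, N])) < real_of_rat q"
        using that unfolding P_def of_rat_less .
      then show ?thesis
        using approx[of s N] N unfolding abs_less_iff by linarith
    qed
  qed
qed

section \<open>Weighted means along a selection\<close>

definition weighted_mean :: "(nat \<Rightarrow> real) \<Rightarrow> (nat \<Rightarrow> real) \<Rightarrow> nat \<Rightarrow> real" where
  "weighted_mean w z n = (\<Sum>k<n. w k * z k) / (\<Sum>k<n. w k)"

lemma weighted_mean_add_le:
  assumes "0 < (\<Sum>k<n. w k)" "\<And>k. 0 \<le> w k" "\<And>k. w k \<noteq> 0 \<Longrightarrow> z k + \<delta> \<le> z' k"
  shows "weighted_mean w z n + \<delta> \<le> weighted_mean w z' n"
proof -
  have "w k * (z k + \<delta>) \<le> w k * z' k" for k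
    using assms(2,3)[of k] by (cases "w k = 0") (auto intro: mult_left_mono)
  then have "w k * z k + \<delta> * w k \<le> w k * z' k" for k
    by (simp add: algebra_simps)
  then have "(\<Sum>k<n. w k * z k) + \<delta> * (\<Sum>k<n. w k) \<le> (\<Sum>k<n. w k * z' k)"
    by (simp add: sum_distrib_left sum.distrib[symmetric] sum_mono)
  then have "((\<Sum>k<n. w k * z k) + \<delta> * (\<Sum>k<n. w k)) / (\<Sum>k<n. w k) \<le> (\<Sum>k<n. w k * z' k) / (\<Sum>k<n. w k)"
    using assms(1) by (intro divide_right_mono) auto
  with assms(1) show ?thesis
    unfolding weighted_mean_def by (simp add: add_divide_distrib)
qed

lemma weighted_mean_gap_nonpos:
  assumes total: "filterlim (\<lambda>n. \<Sum>k<n. w k) at_top sequentially"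
    and "\<And>k. 0 \<le> w k" "\<And>k. w k \<noteq> 0 \<Longrightarrow> z k + \<delta> \<le> z' k"
    and z: "0 \<le> liminf (\<lambda>n. ereal (weighted_mean w z n))"
    and z': "limsup (\<lambda>n. ereal (weighted_mean w z' n)) \<le> 0"
  shows "\<delta> \<le> 0"
proof (rule ccontr)
  assume "\<not> \<delta> \<le> 0"
  have "eventually (\<lambda>n. 0 < (\<Sum>k<n. w k)) sequentially"
    using total by (simp add: filterlim_at_top_dense)
  moreover have "eventually (\<lambda>n. ereal (- \<delta> / 2) < ereal (weighted_mean w z n)) sequentially"
  proof (rule less_LiminfD)
    have "ereal (- \<delta> / 2) < 0" using \<open>\<not> \<delta> \<le> 0\<close> by simp
    then show "ereal (- \<delta> / 2) < liminf (\<lambda>n. ereal (weighted_mean w z n))"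
      using z by (rule order.strict_trans2)
  qed
  ultimately have "eventually (\<lambda>n. ereal (\<delta> / 2) \<le> ereal (weighted_mean w z' n)) sequentially"
  proof eventually_elim
    case (elim n)
    have "weighted_mean w z n + \<delta> \<le> weighted_mean w z' n"
      using elim(1) assms(2,3) by (rule weighted_mean_add_le)
    with elim(2) show ?case by simp
  qed
  then have "ereal (\<delta> / 2) \<le> limsup (\<lambda>n. ereal (weighted_mean w z' n))"
    by (intro le_Limsup) auto
  then have "ereal (\<delta> / 2) \<le> 0"
    using z' by (rule order.trans)
  with \<open>\<not> \<delta> \<le> 0\<close> show False by simp
qed

lemma filterlim_sum_at_top_if_frequently_pos:
  fixes f :: "nat \<Rightarrow> nat"
  assumes "\<exists>\<^sub>F k in sequentially. 0 < f k"
  shows "filterlim (\<lambda>n. \<Sum>k<n. real (f k)) at_top sequentially"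
  unfolding filterlim_at_top eventually_sequentially
proof
  fix Z :: real
  have "infinite {k. 0 < f k}"
    using assms by (simp add: cofinite_eq_sequentially[symmetric] frequently_cofinite)
  then obtain B where B: "B \<subseteq> {k. 0 < f k}" "finite B" "card B = nat \<lceil>Z\<rceil>"
    using infinite_arbitrarily_large by blast
  obtain m where "B \<subseteq> {..<m}"
    using B(2) finite_nat_bounded by blast
  have "Z \<le> (\<Sum>k<n. real (f k))" if "m \<le> n" for n
  proof -
    have "Z \<le> (\<Sum>k\<in>B. 1)" using B(3) by simp linarith
    also have "\<dots> \<le> (\<Sum>k\<in>B. real (f k))"
      using B(1) by (intro sum_mono) auto
    also have "\<dots> \<le> (\<Sum>k<n. real (f k))"
      using \<open>B \<subseteq> {..<m}\<close> that by (intro sum_mono2) auto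
    finally show ?thesis .
  qed
  then show "\<exists>m. \<forall>n\<ge>m. Z \<le> (\<Sum>k<n. real (f k))" by blast
qed

lemma CH_random_gap_nonpos:
  assumes "CH_random \<phi> \<omega>" "CH_random \<psi> \<omega>" "recursive_selection S"
    and often: "\<exists>\<^sub>F k in sequentially. S (prefix \<omega> k) = 1"
    and gap: "\<And>k. S (prefix \<omega> k) = 1 \<Longrightarrow> upper \<phi> (prefix \<omega> k) + \<delta> \<le> lower \<psi> (prefix \<omega> k)"
  shows "\<delta> \<le> 0"
proof -
  define w where "w k = real (S (prefix \<omega> k))" for k
  have S01: "S s \<in> {0, 1}" for s
    using assms(3) unfolding recursive_selection_def by blast
  have total: "filterlim (\<lambda>n. \<Sum>k<n. w k) at_top sequentially"
    unfolding w_def using often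
    by (intro filterlim_sum_at_top_if_frequently_pos) (auto elim: frequently_elim1)
  show ?thesis
  proof (rule weighted_mean_gap_nonpos[OF total])
    show "0 \<le> w k" for k by (simp add: w_def)
    show "of_bool (\<omega> k) - lower \<psi> (prefix \<omega> k) + \<delta> \<le> of_bool (\<omega> k) - upper \<phi> (prefix \<omega> k)"
      if "w k \<noteq> 0" for k
      using that gap[of k] S01[of "prefix \<omega> k"] by (auto simp: w_def)
    show "0 \<le> liminf (\<lambda>n. ereal (weighted_mean w (\<lambda>k. of_bool (\<omega> k) - lower \<psi> (prefix \<omega> k)) n))"
      using assms(2,3) total unfolding CH_random_def weighted_mean_def w_def by blast
    show "limsup (\<lambda>n. ereal (weighted_mean w (\<lambda>k. of_bool (\<omega> k) - upper \<phi> (prefix \<omega> k)) n)) \<le> 0"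
      using assms(1,3) total unfolding CH_random_def weighted_mean_def w_def by blast
  qed
qed

section \<open>Intervals of CH-random constant forecasts\<close>

lemma intervalsD:
  assumes "I \<in> intervals"
  shows "I = {Inf I..Sup I}" "0 \<le> Inf I" "Inf I \<le> Sup I" "Sup I \<le> 1"
  using assms unfolding intervals_def by auto

lemma I_CH_setD:
  assumes "I \<in> I_CH_set \<omega>"
  shows "I \<in> intervals" "CH_random (\<lambda>_. I) \<omega>"
  using assms unfolding I_CH_set_def by auto

lemma unit_interval_in_I_CH_set: "{0..1} \<in> I_CH_set \<omega>"
proof -
  have "{0..1::real} \<in> intervals"
    unfolding intervals_def by (intro CollectI exI[of _ 0] exI[of _ 1]) auto
  moreover have "CH_random (\<lambda>_. {0..1}) \<omega>"
    unfolding CH_random_def lower_def upper_def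
  proof (intro allI impI conjI)
    fix S :: "bool list \<Rightarrow> nat"
    show "0 \<le> liminf (\<lambda>n. ereal ((\<Sum>k<n. real (S (prefix \<omega> k)) * (of_bool (\<omega> k) - Inf {0..1::real})) /
        (\<Sum>k<n. real (S (prefix \<omega> k)))))"
      by (intro Liminf_bounded always_eventually allI) (auto intro!: divide_nonneg_nonneg sum_nonneg)
    show "limsup (\<lambda>n. ereal ((\<Sum>k<n. real (S (prefix \<omega> k)) * (of_bool (\<omega> k) - Sup {0..1::real})) /
        (\<Sum>k<n. real (S (prefix \<omega> k))))) \<le> 0"
      by (intro Limsup_bounded always_eventually allI)
        (auto intro!: divide_nonpos_nonneg sum_nonpos sum_nonneg mult_nonneg_nonpos)
  qed
  ultimately show ?thesis by (simp add: I_CH_set_def)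
qed

lemma I_CH_set_Inf_le_Sup:
  assumes "I \<in> I_CH_set \<omega>" "J \<in> I_CH_set \<omega>"
  shows "Inf I \<le> Sup J"
proof -
  have "recursive_selection (\<lambda>_. 1)"
    using recursive_const by (rule recursive_selectionI) auto
  then have "Inf I - Sup J \<le> 0"
    by (rule CH_random_gap_nonpos[OF I_CH_setD(2)[OF assms(2)] I_CH_setD(2)[OF assms(1)]])
      (auto simp: lower_def upper_def)
  then show ?thesis by simp
qed

lemma I_CH_set_Inf_le_liminf_upper:
  assumes "forecasting_system \<phi>" "computable_fs \<phi>" "CH_random \<phi> \<omega>" and I: "I \<in> I_CH_set \<omega>"
  shows "ereal (Inf I) \<le> liminf (\<lambda>n. ereal (upper \<phi> (prefix \<omega> n)))"
proof (rule ccontr)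
  let ?U = "\<lambda>n. ereal (upper \<phi> (prefix \<omega> n))"
  assume "\<not> ?thesis"
  then obtain a where a: "liminf ?U < ereal a" "a < Inf I"
    using ereal_dense2[of "liminf ?U" "ereal (Inf I)"] by (auto simp: not_le)
  have "0 \<le> upper \<phi> s" for s
    using assms(1) intervalsD(2,3)[of "\<phi> s"] unfolding forecasting_system_def upper_def by force
  then have "0 \<le> liminf ?U"
    by (intro Liminf_bounded always_eventually) auto
  then have "0 < ereal a"
    using a(1) by (rule le_less_trans)
  then have "0 \<le> a" by simp
  obtain g where g: "recfn 2 g" "\<And>s n. \<bar>upper \<phi> s - real_of_rat (dec_rat (g [enc_sit s, n]))\<bar> < 1 / 2 ^ n"
    using assms(2) unfolding computable_fs_def by blast
  define b where "b = (a + Inf I) / 2"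
  have "a < b" "b < Inf I"
    using a(2) unfolding b_def by auto
  obtain P where P: "recursive_selection (\<lambda>s. of_bool (P s))"
    "\<And>s. upper \<phi> s < a \<Longrightarrow> P s" "\<And>s. P s \<Longrightarrow> upper \<phi> s < b"
    using threshold_selection[OF g \<open>0 \<le> a\<close> \<open>a < b\<close>] by blast
  have "\<exists>\<^sub>F k in sequentially. ?U k < ereal a"
    using a(1) by (rule frequently_less_if_Liminf_less)
  then have often: "\<exists>\<^sub>F k in sequentially. of_bool (P (prefix \<omega> k)) = (1::nat)"
    by (rule frequently_elim1) (simp add: P(2))
  have "Inf I - b \<le> 0"
  proof (rule CH_random_gap_nonpos[OF assms(3) I_CH_setD(2)[OF I] P(1) often])
    fix k assume "of_bool (P (prefix \<omega> k)) = (1::nat)"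
    then have "upper \<phi> (prefix \<omega> k) < b"
      by (intro P(3)) (simp add: of_bool_def split: if_splits)
    then show "upper \<phi> (prefix \<omega> k) + (Inf I - b) \<le> lower (\<lambda>_. I) (prefix \<omega> k)"
      by (simp add: lower_def)
  qed
  with \<open>b < Inf I\<close> show False by simp
qed

lemma I_CH_set_limsup_lower_le_Sup:
  assumes "computable_fs \<phi>" "CH_random \<phi> \<omega>" and I: "I \<in> I_CH_set \<omega>"
  shows "limsup (\<lambda>n. ereal (lower \<phi> (prefix \<omega> n))) \<le> ereal (Sup I)"
proof (rule ccontr)
  let ?L = "\<lambda>n. ereal (lower \<phi> (prefix \<omega> n))"
  assume "\<not> ?thesis"
  then obtain b where b: "Sup I < b" "ereal b < limsup ?L"
    using ereal_dense2[of "ereal (Sup I)" "limsup ?L"] by (auto simp: not_le)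
  define a where "a = (Sup I + b) / 2"
  have "0 \<le> a" "a < b"
    using b(1) intervalsD(2,3)[OF I_CH_setD(1)[OF I]] unfolding a_def by auto
  obtain g where g: "recfn 2 g" "\<And>s n. \<bar>lower \<phi> s - real_of_rat (dec_rat (g [enc_sit s, n]))\<bar> < 1 / 2 ^ n"
    using assms(1) unfolding computable_fs_def by blast
  obtain P where P: "recursive_selection (\<lambda>s. of_bool (\<not> P s))"
    "\<And>s. lower \<phi> s < a \<Longrightarrow> P s" "\<And>s. P s \<Longrightarrow> lower \<phi> s < b"
    using threshold_selection[OF g \<open>0 \<le> a\<close> \<open>a < b\<close>] by blast
  have "\<exists>\<^sub>F k in sequentially. ereal b < ?L k"
    using b(2) by (rule frequently_greater_if_less_Limsup)
  then have often: "\<exists>\<^sub>F k in sequentially. of_bool (\<not> P (prefix \<omega> k)) = (1::nat)"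
    by (rule frequently_elim1) (auto dest: P(3))
  have "a - Sup I \<le> 0"
  proof (rule CH_random_gap_nonpos[OF I_CH_setD(2)[OF I] assms(2) P(1) often])
    fix k assume "of_bool (\<not> P (prefix \<omega> k)) = (1::nat)"
    then have "a \<le> lower \<phi> (prefix \<omega> k)"
      using P(2) by (force simp: of_bool_def split: if_splits)
    then show "upper (\<lambda>_. I) (prefix \<omega> k) + (a - Sup I) \<le> lower \<phi> (prefix \<omega> k)"
      by (simp add: upper_def)
  qed
  with b(1) show False unfolding a_def by simp
qed

theorem proposition14:
  fixes \<phi> :: "bool list \<Rightarrow> real set" and \<omega> :: "nat \<Rightarrow> bool"
  assumes "forecasting_system \<phi>" and "computable_fs \<phi>" and "CH_random \<phi> \<omega>"
  shows "ereal (Inf (I_CH \<omega>)) \<le> liminf (\<lambda>n. ereal (upper \<phi> (prefix \<omega> n)))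
       \<and> limsup (\<lambda>n. ereal (lower \<phi> (prefix \<omega> n))) \<le> ereal (Sup (I_CH \<omega>))"
proof -
  let ?C = "I_CH_set \<omega>"
  have C: "?C \<noteq> {}" "\<And>I. I \<in> ?C \<Longrightarrow> I = {Inf I..Sup I}"
    using unit_interval_in_I_CH_set intervalsD(1)[OF I_CH_setD(1)] by blast+
  have "Inf I \<le> 1" "0 \<le> Sup I" if "I \<in> ?C" for I
    using intervalsD[OF I_CH_setD(1)[OF that]] by auto
  then have bdd: "bdd_above (Inf ` ?C)" "bdd_below (Sup ` ?C)"
    by (auto intro!: bdd_aboveI[of _ 1] bdd_belowI[of _ 0])
  have "I_CH \<omega> = {Sup (Inf ` ?C)..Inf (Sup ` ?C)}" "Sup (Inf ` ?C) \<le> Inf (Sup ` ?C)"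
    unfolding I_CH_def using Inter_overlapping_intervals[OF C I_CH_set_Inf_le_Sup] by simp_all
  then have "Inf (I_CH \<omega>) = Sup (Inf ` ?C)" "Sup (I_CH \<omega>) = Inf (Sup ` ?C)"
    by simp_all
  moreover have "ereal (Sup (Inf ` ?C)) \<le> liminf (\<lambda>n. ereal (upper \<phi> (prefix \<omega> n)))"
    using C(1) bdd(1) I_CH_set_Inf_le_liminf_upper[OF assms] by (intro ereal_cSup_le) auto
  moreover have "limsup (\<lambda>n. ereal (lower \<phi> (prefix \<omega> n))) \<le> ereal (Inf (Sup ` ?C))"
    using C(1) bdd(2) I_CH_set_limsup_lower_le_Sup[OF assms(2,3)] by (intro ereal_le_cInf) auto
  ultimately show ?thesis by simp
qed

end
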